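(* Let $F:[0,1]^d\to[0,1]^d$ be a discrete time regulatory network with parameters $K,T,s,a$ as in the context, let $\Lambda$ be its limit set and $\Delta$ its discontinuity set. If $\operatorname{dist}(\Lambda,\Delta)>0$, then $\Lambda$ is finite.
   Context: $K\in[0,1]^{d\times d}$ with $\sum_iK_{i,j}=1$ for each $j$; $s\in\{-1,0,1\}^{d\times d}$ and $T\in[0,1]^{d\times d}$ with $s_{i,j}=0$ iff $K_{i,j}=0$ and $T_{i,j}=0$ iff $K_{i,j}=0$; $a\in[0,1]$; $H(x)=0$ for $x\le0$, $H(x)=1$ for $x>0$; $F(x)_j=ax_j+(1-a)\sum_iK_{i,j}H(s_{i,j}(x_i-T_{i,j}))$. The limit set $\Lambda$ is the set of $x\in[0,1]^d$ for which there exist $y\in[0,1]^d$ and times $t_1<t_2<\cdots$ with $\lim_{n\to\infty}F^{t_n}(y)=x$. The discontinuity set is $\Delta=\{x\in[0,1]^d:\ \exists\, i,k\in\{1,\dots,d\}\text{ with } x_i=T_{i,k}\}$. *)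

theory Defs
  imports "HOL-Analysis.Analysis"
begin

definition heav :: "real \<Rightarrow> real" where
  "heav x = (if x \<le> 0 then 0 else 1)"

definition unit_cube :: "(real ^ 'd) set" where
  "unit_cube = {x. \<forall>i. 0 \<le> x $ i \<and> x $ i \<le> 1}"

definition drn_map :: "('d::finite \<Rightarrow> 'd \<Rightarrow> real) \<Rightarrow> ('d \<Rightarrow> 'd \<Rightarrow> int) \<Rightarrow>
    ('d \<Rightarrow> 'd \<Rightarrow> real) \<Rightarrow> real \<Rightarrow> real ^ 'd \<Rightarrow> real ^ 'd" where
  "drn_map K s T a x = (\<chi> j. a * x $ j
      + (1 - a) * (\<Sum>i\<in>UNIV. K i j * heav (of_int (s i j) * (x $ i - T i j))))"

definition valid_params :: "('d::finite \<Rightarrow> 'd \<Rightarrow> real) \<Rightarrow> ('d \<Rightarrow> 'd \<Rightarrow> int) \<Rightarrow>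
    ('d \<Rightarrow> 'd \<Rightarrow> real) \<Rightarrow> real \<Rightarrow> bool" where
  "valid_params K s T a \<longleftrightarrow>
     (\<forall>i j. 0 \<le> K i j \<and> K i j \<le> 1) \<and> (\<forall>j. (\<Sum>i\<in>UNIV. K i j) = 1) \<and>
     (\<forall>i j. s i j \<in> {-1, 0, 1}) \<and> (\<forall>i j. 0 \<le> T i j \<and> T i j \<le> 1) \<and>
     (\<forall>i j. s i j = 0 \<longleftrightarrow> K i j = 0) \<and> (\<forall>i j. T i j = 0 \<longleftrightarrow> K i j = 0) \<and>
     0 \<le> a \<and> a \<le> 1"

definition limit_set :: "(real ^ 'd \<Rightarrow> real ^ 'd) \<Rightarrow> (real ^ 'd) set" where
  "limit_set F = {x \<in> unit_cube. \<exists>y \<in> unit_cube. \<exists>t :: nat \<Rightarrow> nat.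
      strict_mono t \<and> (\<lambda>n. (F ^^ t n) y) \<longlonglongrightarrow> x}"

definition discontinuity_set :: "('d::finite \<Rightarrow> 'd \<Rightarrow> real) \<Rightarrow> (real ^ 'd) set" where
  "discontinuity_set T = {x \<in> unit_cube. \<exists>i k. x $ i = T i k}"

end

theory Submission
  imports Defs
begin

(* Off the thresholds, F u = a u + (1 - a) c(u) where c depends only on the finite pattern
   H(s i j (u i - T i j)). Two points closer than r, one of which is r-far from every threshold,
   have the same pattern; so while the orbit of the latter stays r-far, the two orbits approach
   each other at rate a (shadowing).
   If a = 1 then F is the identity and the limit set is the whole cube, which meets the
   discontinuity set; so a < 1. If the limit set is 2r-far from the thresholds, compactness makes
   every orbit eventually r-far from them. Pigeonhole on a finite r/2-net of the cube gives a
   return of every orbit r-close to itself within Q steps, Q independent of the orbit; by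
   shadowing such a return after p steps is an asymptotic period, and every limit point is then
   fixed by F^p. A fixed point of F^p is determined by its first p patterns, so the limit set lies
   in finitely many finite sets. *)

lemma seq_compact_near_repeat_bound:
  fixes S :: "'a::metric_space set"
  assumes "seq_compact S" and "0 < e"
  obtains Q :: nat where
    "\<And>z N. (\<And>n. z n \<in> S) \<Longrightarrow> \<exists>n n'. N \<le> n \<and> n < n' \<and> n' \<le> N + Q \<and> dist (z n) (z n') < e"
proof -
  obtain C where C: "finite C" "S \<subseteq> (\<Union>c\<in>C. ball c (e/2))"
    using seq_compact_imp_totally_bounded[OF assms(1)] assms(2) half_gt_zero by metis
  have "\<exists>n n'. N \<le> n \<and> n < n' \<and> n' \<le> N + card C \<and> dist (z n) (z n') < e"
    if z: "\<And>n. z n \<in> S" for z :: "nat \<Rightarrow> 'a" and N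
  proof -
    have "\<forall>n. \<exists>c\<in>C. dist c (z n) < e/2"
      using z C(2) by fastforce
    then obtain c where c: "\<And>n. c n \<in> C \<and> dist (c n) (z n) < e/2"
      by metis
    have "card (c ` {N..N + card C}) \<le> card C"
      using c C(1) by (intro card_mono) auto
    then have "\<not> inj_on c {N..N + card C}"
      by (intro pigeonhole) simp
    then obtain n n' where n: "n \<in> {N..N + card C}" "n' \<in> {N..N + card C}" "n < n'" "c n = c n'"
      unfolding inj_on_def by (metis linorder_neqE_nat)
    have "dist (z n) (z n') \<le> dist (c n) (z n) + dist (c n') (z n')"
      using n(4) by (metis dist_commute dist_triangle)
    also have "\<dots> < e" using c[of n] c[of n'] by linarith
    finally show ?thesis using n by auto
  qed
  then show ?thesis using that by blast
qed

lemma seq_compact_eventually_in_open: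
  fixes z :: "nat \<Rightarrow> 'a::topological_space"
  assumes "seq_compact S" and "\<And>n. z n \<in> S" and "open U"
    and "\<And>f l. strict_mono f \<Longrightarrow> (z \<circ> f) \<longlonglongrightarrow> l \<Longrightarrow> l \<in> U"
  shows "eventually (\<lambda>n. z n \<in> U) sequentially"
proof (rule ccontr)
  assume "\<not> ?thesis"
  then have "infinite {n. z n \<notin> U}"
    by (simp add: not_eventually INFM_iff_infinite flip: cofinite_eq_sequentially)
  then obtain \<sigma> :: "nat \<Rightarrow> nat" where \<sigma>: "strict_mono \<sigma>" "\<And>n. z (\<sigma> n) \<notin> U"
    using infinite_enumerate by blast
  have "\<forall>n. (z \<circ> \<sigma>) n \<in> S"
    using assms(2) by simp
  then obtain l f where f: "strict_mono f" and lim: "(z \<circ> \<sigma> \<circ> f) \<longlonglongrightarrow> l"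
    by (rule seq_compactE[OF assms(1)])
  have "l \<in> U"
    using assms(4)[OF strict_mono_o[OF \<sigma>(1) f]] lim by (simp add: o_assoc)
  with lim assms(3) have "eventually (\<lambda>n. (z \<circ> \<sigma> \<circ> f) n \<in> U) sequentially"
    by (intro topological_tendstoD)
  then show False using \<sigma>(2) by (simp add: eventually_sequentially)
qed

locale regulatory_network =
  fixes K :: "'d::finite \<Rightarrow> 'd \<Rightarrow> real" and s :: "'d \<Rightarrow> 'd \<Rightarrow> int"
    and T :: "'d \<Rightarrow> 'd \<Rightarrow> real" and a :: real
begin

abbreviation F :: "real ^ 'd \<Rightarrow> real ^ 'd" where
  "F \<equiv> drn_map K s T a"

definition pattern :: "real ^ 'd \<Rightarrow> 'd \<Rightarrow> 'd \<Rightarrow> real" where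
  "pattern u i j = heav (of_int (s i j) * (u $ i - T i j))"

definition threshold_far :: "real \<Rightarrow> real ^ 'd \<Rightarrow> bool" where
  "threshold_far r u \<longleftrightarrow> (\<forall>i k. r \<le> \<bar>u $ i - T i k\<bar>)"

lemma drn_map_pattern:
  "F u = a *\<^sub>R u + (1 - a) *\<^sub>R (\<chi> j. \<Sum>i\<in>UNIV. K i j * pattern u i j)"
  by (simp add: drn_map_def pattern_def vec_eq_iff)

lemma finite_range_pattern: "finite (range pattern)"
proof (rule finite_subset)
  show "range pattern \<subseteq> Pi\<^sub>E UNIV (\<lambda>_. Pi\<^sub>E UNIV (\<lambda>_. {0, 1}))"
    by (auto simp: pattern_def heav_def PiE_UNIV_domain)
qed (simp add: finite_PiE)

lemma pattern_eq_if_close: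
  assumes "threshold_far r u" and "dist v u < r"
  shows "pattern v = pattern u"
proof (intro ext)
  fix i j
  have "\<bar>v $ i - u $ i\<bar> < r"
    using dist_vec_nth_le[of v i u] assms(2) by (simp add: dist_real_def)
  moreover have "r \<le> \<bar>u $ i - T i j\<bar>"
    using assms(1) by (simp add: threshold_far_def)
  ultimately have "(0 < v $ i - T i j \<and> 0 < u $ i - T i j) \<or> (v $ i - T i j < 0 \<and> u $ i - T i j < 0)"
    by linarith
  then show "pattern v i j = pattern u i j"
    by (auto simp: pattern_def heav_def zero_less_mult_iff mult_le_0_iff)
qed

lemma drn_map_diff:
  "pattern v = pattern u \<Longrightarrow> F v - F u = a *\<^sub>R (v - u)"
  by (simp add: drn_map_pattern algebra_simps)

lemma funpow_drn_map_diff: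
  "(\<And>i. i < k \<Longrightarrow> pattern ((F ^^ i) v) = pattern ((F ^^ i) u)) \<Longrightarrow>
    (F ^^ k) v - (F ^^ k) u = a ^ k *\<^sub>R (v - u)"
  by (induction k) (simp_all add: drn_map_diff)

lemma funpow_drn_map_shadowing:
  assumes "0 \<le> a" and "a \<le> 1"
    and far: "\<And>i. threshold_far r ((F ^^ i) u)" and close: "dist v u < r"
  shows "(F ^^ k) v - (F ^^ k) u = a ^ k *\<^sub>R (v - u)"
proof (induction k)
  case (Suc k)
  have "dist ((F ^^ k) v) ((F ^^ k) u) = a ^ k * dist v u"
    using Suc.IH assms(1) by (simp add: dist_norm)
  also have "\<dots> \<le> dist v u"
    using assms(1,2) by (simp add: mult_left_le_one_le power_le_one)
  finally have "pattern ((F ^^ k) v) = pattern ((F ^^ k) u)"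
    using far close by (intro pattern_eq_if_close) auto
  then show ?case
    using Suc.IH by (simp add: drn_map_diff)
qed simp

lemma finite_funpow_fixpoints:
  assumes "0 \<le> a" and "a < 1" and "0 < p"
  shows "finite {x. (F ^^ p) x = x}"
proof -
  define word where "word x = restrict (\<lambda>i. pattern ((F ^^ i) x)) {..<p}" for x
  have "inj_on word {x. (F ^^ p) x = x}"
  proof (rule inj_onI)
    fix x x' assume "x \<in> {x. (F ^^ p) x = x}" and "x' \<in> {x. (F ^^ p) x = x}"
      and eq: "word x = word x'"
    then have fixed: "(F ^^ p) x = x" "(F ^^ p) x' = x'"
      by simp_all
    have "pattern ((F ^^ i) x) = pattern ((F ^^ i) x')" if "i < p" for i
      using fun_cong[OF eq, of i] that by (simp add: word_def)
    then have "(F ^^ p) x - (F ^^ p) x' = a ^ p *\<^sub>R (x - x')"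
      by (rule funpow_drn_map_diff)
    then have contract: "x - x' = a ^ p *\<^sub>R (x - x')"
      unfolding fixed .
    have "(1 - a ^ p) *\<^sub>R (x - x') = 0" \<comment> \<open>as a simp rule, \<open>contract\<close> would loop\<close>
      by (simp only: scaleR_diff_left scaleR_one contract[symmetric] diff_self)
    moreover have "a ^ p < 1"
      using assms by (simp add: power_less_one_iff)
    ultimately show "x = x'"
      by simp
  qed
  moreover have "word ` {x. (F ^^ p) x = x} \<subseteq> Pi\<^sub>E {..<p} (\<lambda>_. range pattern)"
    unfolding word_def by (simp add: image_subset_iff restrict_PiE_iff)
  then have "finite (word ` {x. (F ^^ p) x = x})"
    by (rule finite_subset) (simp add: finite_PiE finite_range_pattern)
  ultimately show ?thesis
    by (rule finite_imageD[rotated])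
qed

end

lemma unit_cube_cbox: "unit_cube = cbox 0 (1 :: real ^ 'd::finite)"
  by (auto simp: unit_cube_def mem_box_cart)

locale valid_regulatory_network = regulatory_network +
  assumes valid: "valid_params K s T a"
begin

lemma a_nonneg: "0 \<le> a" and a_le_one: "a \<le> 1"
  using valid by (simp_all add: valid_params_def)

lemma drn_map_unit_cube:
  assumes "u \<in> unit_cube"
  shows "F u \<in> unit_cube"
proof -
  have "0 \<le> F u $ j \<and> F u $ j \<le> 1" for j
  proof -
    define c where "c = (\<Sum>i\<in>UNIV. K i j * pattern u i j)"
    have K: "\<And>i. 0 \<le> K i j" "(\<Sum>i\<in>UNIV. K i j) = 1"
      using valid unfolding valid_params_def by blast+
    have pattern: "\<And>i. 0 \<le> pattern u i j" "\<And>i. pattern u i j \<le> 1"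
      by (simp_all add: pattern_def heav_def)
    have "0 \<le> c"
      unfolding c_def using K(1) pattern(1) by (intro sum_nonneg mult_nonneg_nonneg)
    moreover have "c \<le> (\<Sum>i\<in>UNIV. K i j)"
      unfolding c_def using K(1) pattern(2) by (intro sum_mono mult_left_le)
    moreover have "0 \<le> u $ j" "u $ j \<le> 1"
      using assms by (simp_all add: unit_cube_def)
    moreover have "F u $ j = a * u $ j + (1 - a) * c"
      by (simp add: drn_map_pattern c_def)
    moreover have "a * u $ j \<le> a" "(1 - a) * c \<le> 1 - a"
      using calculation K(2) a_nonneg a_le_one by (simp_all add: mult_left_le)
    ultimately show ?thesis
      using a_nonneg a_le_one by simp
  qed
  then show ?thesis by (simp add: unit_cube_def)
qed

lemma funpow_drn_map_unit_cube: "u \<in> unit_cube \<Longrightarrow> (F ^^ n) u \<in> unit_cube"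
  by (induction n) (simp_all add: drn_map_unit_cube)

lemma limit_set_threshold_far:
  assumes "\<forall>x\<in>limit_set F. \<forall>z\<in>discontinuity_set T. e \<le> dist x z"
    and "x \<in> limit_set F"
  shows "threshold_far e x"
  unfolding threshold_far_def
proof (intro allI)
  fix i k
  define w where "w = x - (x $ i - T i k) *\<^sub>R axis i 1"
  have w: "w $ j = (if j = i then T i k else x $ j)" for j
    by (simp add: w_def axis_def)
  have "0 \<le> T i k" "T i k \<le> 1"
    using valid unfolding valid_params_def by blast+
  moreover have "x \<in> unit_cube"
    using assms(2) by (simp add: limit_set_def)
  ultimately have "w \<in> unit_cube"
    by (simp add: unit_cube_def w)
  then have "w \<in> discontinuity_set T"
    unfolding discontinuity_set_def using w[of i] by auto
  then have "e \<le> dist x w"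
    using assms by blast
  then show "e \<le> \<bar>x $ i - T i k\<bar>"
    by (simp add: w_def dist_norm)
qed

lemma contracting_if_limit_set_threshold_far:
  assumes "0 < e" and "\<forall>x\<in>limit_set F. threshold_far e x"
  shows "a < 1"
proof (rule ccontr)
  assume "\<not> a < 1"
  then have "F = id"
    using a_le_one by (simp add: drn_map_def fun_eq_iff vec_eq_iff)
  define x where "x = (\<chi> j. T j j)"
  have "x \<in> unit_cube"
    using valid by (simp add: x_def unit_cube_def valid_params_def)
  then have "x \<in> limit_set F"
    unfolding limit_set_def using \<open>F = id\<close> strict_mono_id by fastforce
  then have "e \<le> \<bar>x $ i - T i i\<bar>" for i
    using assms(2) by (simp add: threshold_far_def)
  then show False
    using \<open>0 < e\<close> by (simp add: x_def)
qed

lemma orbit_eventually_threshold_far: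
  assumes "0 < r" and far: "\<forall>x\<in>limit_set F. threshold_far (2 * r) x"
    and y: "y \<in> unit_cube"
  shows "eventually (\<lambda>n. threshold_far r ((F ^^ n) y)) sequentially"
proof -
  define U where "U = {u. \<forall>i k. r < \<bar>u $ i - T i k\<bar>}"
  have "open U"
    unfolding U_def Collect_all_eq
    by (intro open_INT ballI open_Collect_less continuous_intros) auto
  moreover have "seq_compact (unit_cube :: (real ^ 'd) set)"
    by (simp add: unit_cube_cbox compact_imp_seq_compact)
  moreover have "l \<in> U" if "strict_mono t" "((\<lambda>n. (F ^^ n) y) \<circ> t) \<longlonglongrightarrow> l" for t l
  proof -
    have "\<forall>n. ((\<lambda>n. (F ^^ n) y) \<circ> t) n \<in> unit_cube"
      using funpow_drn_map_unit_cube[OF y] by simp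
    then have "l \<in> unit_cube"
      using closed_sequentially[OF _ _ that(2)] by (metis closed_cbox unit_cube_cbox)
    then have "l \<in> limit_set F"
      unfolding limit_set_def using that y by (auto simp: o_def)
    then have l_far: "2 * r \<le> \<bar>l $ i - T i k\<bar>" for i k
      using far by (simp add: threshold_far_def)
    have "r < \<bar>l $ i - T i k\<bar>" for i k
      using l_far[of i k] \<open>0 < r\<close> by linarith
    then show ?thesis
      by (simp add: U_def)
  qed
  ultimately have "eventually (\<lambda>n. (F ^^ n) y \<in> U) sequentially"
    using funpow_drn_map_unit_cube[OF y] by (intro seq_compact_eventually_in_open)
  then show ?thesis
    by (rule eventually_mono) (auto simp: U_def threshold_far_def less_imp_le)
qed

lemma orbit_shadowing:
  assumes far: "\<And>m. N \<le> m \<Longrightarrow> threshold_far r ((F ^^ m) y)"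
    and "N \<le> m" and "dist v ((F ^^ m) y) < r"
  shows "(F ^^ k) v - (F ^^ (k + m)) y = a ^ k *\<^sub>R (v - (F ^^ m) y)"
proof -
  have "threshold_far r ((F ^^ i) ((F ^^ m) y))" for i
    using far[of "i + m"] \<open>N \<le> m\<close> by (simp add: funpow_add)
  from funpow_drn_map_shadowing[OF a_nonneg a_le_one this assms(3)] show ?thesis
    by (simp add: funpow_add)
qed

lemma orbit_asymptotically_periodic:
  assumes "a < 1" and "0 < r"
    and far: "\<forall>x\<in>limit_set F. threshold_far (2 * r) x"
    and repeat: "\<And>y N. y \<in> unit_cube \<Longrightarrow>
      \<exists>n n'. N \<le> n \<and> n < n' \<and> n' \<le> N + Q \<and> dist ((F ^^ n) y) ((F ^^ n') y) < r"
    and y: "y \<in> unit_cube"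
  obtains N p where "p \<in> {1..Q}" and "\<And>m. N \<le> m \<Longrightarrow> threshold_far r ((F ^^ m) y)"
    and "(\<lambda>k. (F ^^ (k + p)) y - (F ^^ k) y) \<longlonglongrightarrow> 0"
proof -
  obtain N where orbit_far: "\<And>m. N \<le> m \<Longrightarrow> threshold_far r ((F ^^ m) y)"
    using orbit_eventually_threshold_far[OF \<open>0 < r\<close> far y] by (auto simp: eventually_sequentially)
  obtain n n' where n: "N \<le> n" "n < n'" "n' \<le> N + Q"
    and "dist ((F ^^ n) y) ((F ^^ n') y) < r"
    using repeat[OF y, of N] by blast
  then have close: "dist ((F ^^ n') y) ((F ^^ n) y) < r"
    by (simp add: dist_commute)
  define p where "p = n' - n"
  have "(\<lambda>k. a ^ k *\<^sub>R ((F ^^ n') y - (F ^^ n) y)) \<longlonglongrightarrow> 0 *\<^sub>R ((F ^^ n') y - (F ^^ n) y)"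
    using a_nonneg \<open>a < 1\<close> by (intro tendsto_intros) simp
  moreover have "(F ^^ (k + n')) y - (F ^^ (k + n)) y = a ^ k *\<^sub>R ((F ^^ n') y - (F ^^ n) y)" for k
    using orbit_shadowing[OF orbit_far n(1) close, of k] by (simp add: funpow_add)
  ultimately have "(\<lambda>k. (F ^^ (k + n + p)) y - (F ^^ (k + n)) y) \<longlonglongrightarrow> 0"
    using n(2) by (simp add: p_def add.assoc)
  then have "(\<lambda>k. (F ^^ (k + p)) y - (F ^^ k) y) \<longlonglongrightarrow> 0"
    by (rule LIMSEQ_offset)
  moreover have "p \<in> {1..Q}"
    using n unfolding p_def by (simp; arith)
  ultimately show ?thesis
    using that orbit_far by blast
qed

lemma limit_point_fixed_by_asymptotic_period:
  assumes far: "\<And>m. N \<le> m \<Longrightarrow> threshold_far r ((F ^^ m) y)" and "0 < r"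
    and period: "(\<lambda>k. (F ^^ (k + p)) y - (F ^^ k) y) \<longlonglongrightarrow> 0"
    and t: "strict_mono t" and lim: "(\<lambda>l. (F ^^ t l) y) \<longlonglongrightarrow> x"
  shows "(F ^^ p) x = x"
proof -
  from LIMSEQ_subseq_LIMSEQ[OF period t]
  have "(\<lambda>l. (F ^^ (t l + p)) y - (F ^^ t l) y) \<longlonglongrightarrow> 0"
    by (simp add: o_def)
  from tendsto_add[OF this lim] have to_x: "(\<lambda>l. (F ^^ (t l + p)) y) \<longlonglongrightarrow> x"
    by simp
  have "eventually (\<lambda>l. dist x ((F ^^ t l) y) < r) sequentially"
    using lim \<open>0 < r\<close> by (auto simp: dist_commute dest: tendstoD)
  moreover have "eventually (\<lambda>l. N \<le> t l) sequentially"
    using eventually_ge_at_top[of N] by (rule eventually_mono) (meson le_trans seq_suble[OF t])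
  ultimately have "eventually (\<lambda>l.
      (F ^^ p) x - (F ^^ (p + t l)) y = a ^ p *\<^sub>R (x - (F ^^ t l) y)) sequentially"
    by eventually_elim (rule orbit_shadowing[OF far])
  moreover have "(\<lambda>l. a ^ p *\<^sub>R (x - (F ^^ t l) y)) \<longlonglongrightarrow> a ^ p *\<^sub>R (x - x)"
    using lim by (intro tendsto_intros)
  ultimately have "(\<lambda>l. (F ^^ p) x - (F ^^ (p + t l)) y) \<longlonglongrightarrow> 0"
    by (simp add: tendsto_cong)
  from tendsto_diff[OF tendsto_const[of "(F ^^ p) x"] this]
  have "(\<lambda>l. (F ^^ (t l + p)) y) \<longlonglongrightarrow> (F ^^ p) x"
    by (simp add: add.commute)
  then show ?thesis
    using to_x by (rule LIMSEQ_unique)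
qed

lemma limit_point_periodic:
  assumes "a < 1" and "0 < r"
    and far: "\<forall>x\<in>limit_set F. threshold_far (2 * r) x"
    and repeat: "\<And>y N. y \<in> unit_cube \<Longrightarrow>
      \<exists>n n'. N \<le> n \<and> n < n' \<and> n' \<le> N + Q \<and> dist ((F ^^ n) y) ((F ^^ n') y) < r"
    and "x \<in> limit_set F"
  shows "\<exists>p\<in>{1..Q}. (F ^^ p) x = x"
proof -
  obtain y t where y: "y \<in> unit_cube" and "strict_mono t"
    and "(\<lambda>l. (F ^^ t l) y) \<longlonglongrightarrow> x"
    using assms(5) by (auto simp: limit_set_def)
  moreover obtain N p where "p \<in> {1..Q}" and "\<And>m. N \<le> m \<Longrightarrow> threshold_far r ((F ^^ m) y)"
    and "(\<lambda>k. (F ^^ (k + p)) y - (F ^^ k) y) \<longlonglongrightarrow> 0"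
    using orbit_asymptotically_periodic[OF assms(1-4) y] by blast
  ultimately show ?thesis
    using limit_point_fixed_by_asymptotic_period \<open>0 < r\<close> by blast
qed

end

theorem mainTheorem4:
  fixes K :: "'d::finite \<Rightarrow> 'd \<Rightarrow> real" and s :: "'d \<Rightarrow> 'd \<Rightarrow> int"
    and T :: "'d \<Rightarrow> 'd \<Rightarrow> real" and a :: real
  assumes "valid_params K s T a"
    and "\<exists>\<epsilon>>0. \<forall>x\<in>limit_set (drn_map K s T a). \<forall>z\<in>discontinuity_set T. \<epsilon> \<le> dist x z"
  shows "finite (limit_set (drn_map K s T a))"
proof -
  interpret valid_regulatory_network K s T a
    by unfold_locales (fact assms(1))
  obtain e where "0 < e"
    and "\<forall>x\<in>limit_set F. \<forall>z\<in>discontinuity_set T. e \<le> dist x z"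
    using assms(2) by blast
  then have far: "\<forall>x\<in>limit_set F. threshold_far (2 * (e / 2)) x"
    using limit_set_threshold_far by simp
  have "a < 1"
    using contracting_if_limit_set_threshold_far \<open>0 < e\<close> far by simp
  have "seq_compact (unit_cube :: (real ^ 'd) set)"
    by (simp add: unit_cube_cbox compact_imp_seq_compact)
  then obtain Q where repeat: "\<And>(z :: nat \<Rightarrow> real ^ 'd) N. (\<And>n. z n \<in> unit_cube) \<Longrightarrow>
      \<exists>n n'. N \<le> n \<and> n < n' \<and> n' \<le> N + Q \<and> dist (z n) (z n') < e / 2"
    using seq_compact_near_repeat_bound[OF _ half_gt_zero[OF \<open>0 < e\<close>]] by blast
  have "limit_set F \<subseteq> (\<Union>p\<in>{1..Q}. {x. (F ^^ p) x = x})"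
    using limit_point_periodic[OF \<open>a < 1\<close> _ far repeat[OF funpow_drn_map_unit_cube]] \<open>0 < e\<close>
    by fastforce
  moreover have "finite (\<Union>p\<in>{1..Q}. {x. (F ^^ p) x = x})"
    using finite_funpow_fixpoints[OF a_nonneg \<open>a < 1\<close>] by simp
  ultimately show ?thesis
    by (rule finite_subset)
qed

end
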